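(* Let $R$ be a commutative ring, $n\ge1$, and $f\in(T_n(R))[x]$. Then $f(C)=0$ for all $C\in T_n(R)$ if and only if $f_{ij}\in N_R(T_{n-j+1}(R))$ for all $1\le i\le j\le n$. Also, $f(C)_\ell=0$ for all $C\in T_n(R)$ if and only if $f_{ij}\in N_R(T_i(R))$ for all $1\le i\le j\le n$. Equivalently, under the identification of $(T_n(R))[x]$ with $T_n(R[x])$ via $f\mapsto(f_{ij})$, the set $N_{T_n(R)}(T_n(R))$ of right null-polynomials is the set of upper triangular matrices whose $(i,j)$-entry ($i\le j$) lies in $N_R(T_{n-j+1}(R))$, and the set $N^{\ell}_{T_n(R)}(T_n(R))$ of left null-polynomials is the set of upper triangular matrices whose $(i,j)$-entry ($i\le j$) lies in $N_R(T_i(R))$.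
   Context: $T_n(A)$ denotes the ring of upper triangular $n\times n$ matrices over a ring $A$. For $f=\sum_k F_kx^k\in(T_n(R))[x]$ with $F_k\in T_n(R)$, right substitution is $f(C)=\sum_kF_kC^k$ and left substitution is $f(C)_\ell=\sum_kC^kF_k$. Writing $f_{ij}^{(k)}$ for the $(i,j)$-entry of $F_k$, set $f_{ij}=\sum_k f_{ij}^{(k)}x^k\in R[x]$; the map $f\mapsto(f_{ij})$ is a ring isomorphism $(T_n(R))[x]\to T_n(R[x])$. For $m\ge1$, $N_R(T_m(R))=\{g\in R[x]\mid \forall C\in T_m(R):\ g(C)=0\}$ (usual evaluation). $N_{T_n(R)}(T_n(R))=\{f\in(T_n(R))[x]\mid\forall C\in T_n(R):\ f(C)=0\}$ and $N^{\ell}_{T_n(R)}(T_n(R))=\{f\in(T_n(R))[x]\mid\forall C\in T_n(R):\ f(C)_\ell=0\}$. *)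

theory Defs
  imports "HOL-Computational_Algebra.Polynomial"
begin

text \<open>Square matrices of size n are represented as functions nat => nat => 'a,
  indices 1..n, entries outside the index range being 0.\<close>

type_synonym 'a sqmat = "nat \<Rightarrow> nat \<Rightarrow> 'a"

definition upper_tri :: "nat \<Rightarrow> 'a::zero sqmat \<Rightarrow> bool" where
  "upper_tri n A \<longleftrightarrow> (\<forall>i j. A i j \<noteq> 0 \<longrightarrow> 1 \<le> i \<and> i \<le> j \<and> j \<le> n)"

definition Tmats :: "nat \<Rightarrow> 'a::zero sqmat set" where
  "Tmats n = {A. upper_tri n A}"

definition mat_mult :: "nat \<Rightarrow> 'a::comm_ring_1 sqmat \<Rightarrow> 'a sqmat \<Rightarrow> 'a sqmat" where
  "mat_mult n A B = (\<lambda>i j. \<Sum>k\<in>{1..n}. A i k * B k j)"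

definition mat_one :: "nat \<Rightarrow> 'a::comm_ring_1 sqmat" where
  "mat_one n = (\<lambda>i j. if i = j \<and> 1 \<le> i \<and> i \<le> n then 1 else 0)"

fun mat_pow :: "nat \<Rightarrow> 'a::comm_ring_1 sqmat \<Rightarrow> nat \<Rightarrow> 'a sqmat" where
  "mat_pow n C 0 = mat_one n"
| "mat_pow n C (Suc k) = mat_mult n (mat_pow n C k) C"

definition poly_mat :: "nat \<Rightarrow> 'a::comm_ring_1 poly \<Rightarrow> 'a sqmat \<Rightarrow> 'a sqmat" where
  "poly_mat m g C = (\<lambda>i j. \<Sum>k\<le>degree g. coeff g k * mat_pow m C k i j)"

definition nullR :: "nat \<Rightarrow> 'a::comm_ring_1 poly set" where
  "nullR m = {g. \<forall>C\<in>Tmats m. poly_mat m g C = (\<lambda>i j. 0)}"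

text \<open>A polynomial f in (T_n(R))[x] is represented by its entry polynomials
  f_ij (identification (T_n(R))[x] = T_n(R[x])); its k-th coefficient matrix
  F_k has (i,j)-entry coeff (f i j) k.\<close>
definition coeff_mat :: "'a::comm_ring_1 poly sqmat \<Rightarrow> nat \<Rightarrow> 'a sqmat" where
  "coeff_mat f k = (\<lambda>i j. coeff (f i j) k)"

definition mdeg :: "nat \<Rightarrow> 'a::comm_ring_1 poly sqmat \<Rightarrow> nat" where
  "mdeg n f = Max {degree (f i j) | i j. i \<in> {1..n} \<and> j \<in> {1..n}}"

definition eval_right :: "nat \<Rightarrow> 'a::comm_ring_1 poly sqmat \<Rightarrow> 'a sqmat \<Rightarrow> 'a sqmat" where
  "eval_right n f C = (\<lambda>i j. \<Sum>k\<le>mdeg n f. mat_mult n (coeff_mat f k) (mat_pow n C k) i j)"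

definition eval_left :: "nat \<Rightarrow> 'a::comm_ring_1 poly sqmat \<Rightarrow> 'a sqmat \<Rightarrow> 'a sqmat" where
  "eval_left n f C = (\<lambda>i j. \<Sum>k\<le>mdeg n f. mat_mult n (mat_pow n C k) (coeff_mat f k) i j)"

end

theory Submission
  imports Defs
begin

text \<open>The \<open>(i,j)\<close>-entry of \<open>f(C)\<close> is \<open>\<Sum>l. f_il(C)_lj\<close>, and that of \<open>f(C)_\<ell>\<close> is \<open>\<Sum>l. f_lj(C)_il\<close>,
  where \<open>g(C)\<close> is the usual evaluation. For upper triangular \<open>C\<close> the entry \<open>g(C)_xy\<close> only
  depends on the diagonal block of \<open>C\<close> between indices \<open>x\<close> and \<open>y\<close>, so it vanishes for all \<open>C\<close>
  when \<open>g\<close> is null on \<open>T_(y-x+1)\<close>; this gives sufficiency. For necessity in the right case,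
  descend over the column \<open>l\<close>: placing an arbitrary \<open>D \<in> T_(n-l+1)\<close> as the lower right block
  of \<open>C\<close> kills the terms with \<open>p < l\<close>, the terms with \<open>p > l\<close> vanish by the induction
  hypothesis, so the first row of \<open>f_il(D)\<close> vanishes, and by moving blocks along the diagonal
  this already forces \<open>f_il\<close> to be null on \<open>T_(n-l+1)\<close>. The left case is the mirror image,
  with upper left blocks, ascending rows and last columns.\<close>

lemma upper_triD: "upper_tri n A \<Longrightarrow> A i j \<noteq> 0 \<Longrightarrow> 1 \<le> i \<and> i \<le> j \<and> j \<le> n"
  by (auto simp: upper_tri_def)

lemma upper_tri_eq_0: "upper_tri n A \<Longrightarrow> \<not> (1 \<le> i \<and> i \<le> j \<and> j \<le> n) \<Longrightarrow> A i j = 0"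
  using upper_triD by blast

lemma upper_tri_mat_pow:
  assumes "C \<in> Tmats n"
  shows "upper_tri n (mat_pow n C k)"
proof (induction k)
  case 0
  then show ?case by (auto simp: upper_tri_def mat_one_def)
next
  case (Suc k)
  have C: "upper_tri n C" using assms by (simp add: Tmats_def)
  show ?case unfolding upper_tri_def
  proof (intro allI impI)
    fix i j assume "mat_pow n C (Suc k) i j \<noteq> 0"
    then obtain r where "mat_pow n C k i r * C r j \<noteq> 0"
      using sum.not_neutral_contains_not_neutral[of "\<lambda>r. mat_pow n C k i r * C r j" "{1..n}"]
      by (auto simp: mat_mult_def)
    then have "mat_pow n C k i r \<noteq> 0" "C r j \<noteq> 0" by auto
    then show "1 \<le> i \<and> i \<le> j \<and> j \<le> n"
      using upper_triD[OF Suc.IH] upper_triD[OF C] by (meson order_trans)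
  qed
qed

lemma mat_mult_upper_tri:
  assumes "upper_tri n A" "upper_tri n B" "1 \<le> x" "y \<le> n"
  shows "mat_mult n A B x y = (\<Sum>r\<in>{x..y}. A x r * B r y)"
  unfolding mat_mult_def
proof (rule sum.mono_neutral_right)
  show "\<forall>r\<in>{1..n} - {x..y}. A x r * B r y = 0"
    using upper_tri_eq_0[OF assms(1), of x] upper_tri_eq_0[OF assms(2), of _ y] by auto
qed (use assms in auto)

lemma poly_mat_eq_0_outside:
  assumes "C \<in> Tmats n" "\<not> (1 \<le> x \<and> x \<le> y \<and> y \<le> n)"
  shows "poly_mat n g C x y = 0"
  unfolding poly_mat_def using upper_tri_eq_0[OF upper_tri_mat_pow[OF assms(1)] assms(2)] by simp

lemma poly_mat_0 [simp]: "poly_mat n 0 C x y = 0"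
  by (simp add: poly_mat_def)

lemma mat_pow_block:
  assumes C: "C \<in> Tmats n" and D: "D \<in> Tmats m" and "1 \<le> p" "q \<le> m" "q + s \<le> n"
    and agree: "\<And>x y. p \<le> x \<Longrightarrow> x \<le> y \<Longrightarrow> y \<le> q \<Longrightarrow> D x y = C (x + s) (y + s)"
  shows "p \<le> x \<Longrightarrow> x \<le> y \<Longrightarrow> y \<le> q \<Longrightarrow> mat_pow m D k x y = mat_pow n C k (x + s) (y + s)"
proof (induction k arbitrary: x y)
  case 0
  then show ?case using assms by (auto simp: mat_one_def)
next
  case (Suc k)
  have Cu: "upper_tri n C" and Du: "upper_tri m D" using C D by (auto simp: Tmats_def)
  have "mat_pow m D (Suc k) x y = (\<Sum>r\<in>{x..y}. mat_pow m D k x r * D r y)"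
    using mat_mult_upper_tri[OF upper_tri_mat_pow[OF D] Du] Suc.prems assms by simp
  also have "\<dots> = (\<Sum>r\<in>{x..y}. mat_pow n C k (x + s) (r + s) * C (r + s) (y + s))"
    using Suc.IH Suc.prems agree by (intro sum.cong) auto
  also have "\<dots> = (\<Sum>r\<in>{x + s..y + s}. mat_pow n C k (x + s) r * C r (y + s))"
    by (rule sum.shift_bounds_cl_nat_ivl[symmetric])
  also have "\<dots> = mat_pow n C (Suc k) (x + s) (y + s)"
    using mat_mult_upper_tri[OF upper_tri_mat_pow[OF C] Cu] Suc.prems assms by simp
  finally show ?case .
qed

lemma poly_mat_block:
  assumes "C \<in> Tmats n" "D \<in> Tmats m" "1 \<le> p" "q \<le> m" "q + s \<le> n"
    "\<And>x y. p \<le> x \<Longrightarrow> x \<le> y \<Longrightarrow> y \<le> q \<Longrightarrow> D x y = C (x + s) (y + s)"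
    "p \<le> x" "x \<le> y" "y \<le> q"
  shows "poly_mat m g D x y = poly_mat n g C (x + s) (y + s)"
  unfolding poly_mat_def using mat_pow_block[OF assms(1-6)] assms(7-9) by simp

definition submat :: "nat \<Rightarrow> nat \<Rightarrow> 'a::zero sqmat \<Rightarrow> 'a sqmat" where
  "submat s N C = (\<lambda>x y. if 1 \<le> x \<and> y \<le> N then C (x + s) (y + s) else 0)"

definition embed_mat :: "nat \<Rightarrow> nat \<Rightarrow> 'a::zero sqmat \<Rightarrow> 'a sqmat" where
  "embed_mat s N D = (\<lambda>x y. if s < x \<and> y \<le> N then D (x - s) (y - s) else 0)"

lemma submat_Tmats:
  assumes "C \<in> Tmats n" "N \<le> m"
  shows "submat s N C \<in> Tmats m"
  using assms upper_triD[of n C "_ + s" "_ + s"]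
  by (auto simp: Tmats_def upper_tri_def submat_def split: if_splits)

lemma embed_mat_Tmats:
  assumes "D \<in> Tmats m" "N \<le> n"
  shows "embed_mat s N D \<in> Tmats n"
  using assms upper_triD[of m D "_ - s" "_ - s"]
  by (fastforce simp: Tmats_def upper_tri_def embed_mat_def split: if_splits)

lemma poly_mat_submat:
  assumes "C \<in> Tmats n" "N \<le> m" "N + s \<le> n" "1 \<le> x" "x \<le> y" "y \<le> N"
  shows "poly_mat m g (submat s N C) x y = poly_mat n g C (x + s) (y + s)"
  by (rule poly_mat_block[OF assms(1) submat_Tmats[OF assms(1,2)], where p = 1 and q = N])
    (use assms in \<open>auto simp: submat_def\<close>)

lemma poly_mat_embed_mat:
  assumes "D \<in> Tmats m" "N \<le> n" "1 \<le> x" "x \<le> y" "y \<le> m" "y + s \<le> N"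
  shows "poly_mat n g (embed_mat s N D) (x + s) (y + s) = poly_mat m g D x y"
  by (rule poly_mat_block[OF embed_mat_Tmats[OF assms(1,2)] assms(1), where p = 1 and q = y,
        symmetric]) (use assms in \<open>auto simp: embed_mat_def\<close>)

lemma poly_mat_eq_0_if_rows_0:
  assumes "\<And>a b. a \<le> s \<Longrightarrow> C a b = 0" "x \<le> s" "s < y"
  shows "poly_mat n g C x y = 0"
proof -
  have "mat_pow n C k x y = 0" if "s < y" for k y
    using that
  proof (induction k arbitrary: y)
    case 0
    then show ?case using assms(2) by (simp add: mat_one_def)
  next
    case (Suc k)
    have "mat_pow n C k x r * C r y = 0" for r
      using Suc.IH[of r] assms(1)[of r] by (cases "s < r") auto
    then show ?case by (simp add: mat_mult_def)
  qed
  then show ?thesis unfolding poly_mat_def using assms(3) by simp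
qed

lemma poly_mat_eq_0_if_columns_0:
  assumes "\<And>a b. N < b \<Longrightarrow> C a b = 0" "x \<le> N" "N < y"
  shows "poly_mat n g C x y = 0"
proof -
  have "mat_pow n C k x y = 0" for k
    using assms by (cases k) (simp_all add: mat_one_def mat_mult_def)
  then show ?thesis unfolding poly_mat_def by simp
qed

lemma poly_mat_eq_0_if_nullR:
  assumes "g \<in> nullR m" "C \<in> Tmats n" "1 \<le> x" "x \<le> y" "y \<le> n" "y < m + x"
  shows "poly_mat n g C x y = 0"
proof -
  have "poly_mat n g C x y = poly_mat m g (submat (x - 1) (y - (x - 1)) C) 1 (y - (x - 1))"
    using poly_mat_submat[OF assms(2), of "y - (x - 1)" m "x - 1" 1 "y - (x - 1)" g] assms by simp
  also have "\<dots> = 0"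
    using assms submat_Tmats[OF assms(2)] by (simp add: nullR_def)
  finally show ?thesis .
qed

lemma nullR_if_first_row_0:
  assumes "\<And>D c. D \<in> Tmats m \<Longrightarrow> 1 \<le> c \<Longrightarrow> c \<le> m \<Longrightarrow> poly_mat m g D 1 c = 0"
  shows "g \<in> nullR m"
  unfolding nullR_def
proof (intro CollectI ballI ext)
  fix D :: "'a sqmat" and a b assume D: "D \<in> Tmats m"
  show "poly_mat m g D a b = 0"
  proof (cases "1 \<le> a \<and> a \<le> b \<and> b \<le> m")
    case True
    let ?s = "a - 1"
    have "poly_mat m g (submat ?s (m - ?s) D) 1 (b - ?s) = poly_mat m g D a b"
      using poly_mat_submat[OF D, of "m - ?s" m ?s 1 "b - ?s" g] True by auto
    moreover have "poly_mat m g (submat ?s (m - ?s) D) 1 (b - ?s) = 0"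
      by (rule assms[OF submat_Tmats[OF D]]) (use True in auto)
    ultimately show ?thesis by simp
  qed (use poly_mat_eq_0_outside[OF D] in blast)
qed

lemma nullR_if_last_column_0:
  assumes "\<And>D a. D \<in> Tmats m \<Longrightarrow> 1 \<le> a \<Longrightarrow> a \<le> m \<Longrightarrow> poly_mat m g D a m = 0"
  shows "g \<in> nullR m"
  unfolding nullR_def
proof (intro CollectI ballI ext)
  fix D :: "'a sqmat" and a b assume D: "D \<in> Tmats m"
  show "poly_mat m g D a b = 0"
  proof (cases "1 \<le> a \<and> a \<le> b \<and> b \<le> m")
    case True
    let ?s = "m - b"
    have "poly_mat m g D a b = poly_mat m g (embed_mat ?s m D) (a + ?s) m"
      using poly_mat_embed_mat[OF D, of m m a b ?s g] True by simp
    also have "\<dots> = 0"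
      by (rule assms[OF embed_mat_Tmats[OF D order.refl]]) (use True in auto)
    finally show ?thesis .
  qed (use poly_mat_eq_0_outside[OF D] in blast)
qed

lemma degree_le_mdeg:
  assumes "upper_tri n f"
  shows "degree (f i j) \<le> mdeg n f"
proof (cases "i \<in> {1..n} \<and> j \<in> {1..n}")
  case True
  have "{degree (f i j) | i j. i \<in> {1..n} \<and> j \<in> {1..n}}
      = (\<lambda>(i, j). degree (f i j)) ` ({1..n} \<times> {1..n})"
    by auto blast
  then show ?thesis
    unfolding mdeg_def using True by (intro Max_ge) auto
next
  case False
  then show ?thesis using upper_tri_eq_0[OF assms, of i j] by auto
qed

lemma sum_coeff_le_degree:
  fixes g :: "'a::semiring_0 poly"
  assumes "degree g \<le> M"
  shows "(\<Sum>k\<le>M. coeff g k * h k) = (\<Sum>k\<le>degree g. coeff g k * h k)"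
proof (rule sum.mono_neutral_right)
  show "\<forall>k\<in>{..M} - {..degree g}. coeff g k * h k = 0"
    by (auto simp: coeff_eq_0)
qed (use assms in auto)

lemma eval_right_entry:
  assumes "upper_tri n f"
  shows "eval_right n f C i j = (\<Sum>l\<in>{1..n}. poly_mat n (f i l) C l j)"
proof -
  have "eval_right n f C i j = (\<Sum>l\<in>{1..n}. \<Sum>k\<le>mdeg n f. coeff (f i l) k * mat_pow n C k l j)"
    by (simp add: eval_right_def mat_mult_def coeff_mat_def sum.swap[of _ "{..mdeg n f}"])
  also have "\<dots> = (\<Sum>l\<in>{1..n}. poly_mat n (f i l) C l j)"
    unfolding poly_mat_def by (intro sum.cong refl sum_coeff_le_degree degree_le_mdeg[OF assms])
  finally show ?thesis .
qed

lemma eval_left_entry: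
  assumes "upper_tri n f"
  shows "eval_left n f C i j = (\<Sum>l\<in>{1..n}. poly_mat n (f l j) C i l)"
proof -
  have "eval_left n f C i j = (\<Sum>l\<in>{1..n}. \<Sum>k\<le>mdeg n f. coeff (f l j) k * mat_pow n C k i l)"
    by (simp add: eval_left_def mat_mult_def coeff_mat_def mult.commute
        sum.swap[of _ "{..mdeg n f}"])
  also have "\<dots> = (\<Sum>l\<in>{1..n}. poly_mat n (f l j) C i l)"
    unfolding poly_mat_def by (intro sum.cong refl sum_coeff_le_degree degree_le_mdeg[OF assms])
  finally show ?thesis .
qed

lemma eval_right_null_if_nullR:
  assumes f: "upper_tri n f"
    and null: "\<And>i j. 1 \<le> i \<Longrightarrow> i \<le> j \<Longrightarrow> j \<le> n \<Longrightarrow> f i j \<in> nullR (n - j + 1)"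
    and C: "C \<in> Tmats n"
  shows "eval_right n f C = (\<lambda>i j. 0)"
proof (intro ext)
  fix i j
  have "poly_mat n (f i l) C l j = 0" for l
  proof (cases "1 \<le> i \<and> i \<le> l \<and> l \<le> n")
    case True
    show ?thesis
    proof (cases "l \<le> j \<and> j \<le> n")
      case True
      with \<open>1 \<le> i \<and> i \<le> l \<and> l \<le> n\<close> show ?thesis
        by (intro poly_mat_eq_0_if_nullR[OF null C]) auto
    qed (use True poly_mat_eq_0_outside[OF C] in auto)
  qed (simp add: upper_tri_eq_0[OF f])
  then show "eval_right n f C i j = 0" by (simp add: eval_right_entry[OF f])
qed

lemma eval_left_null_if_nullR:
  assumes f: "upper_tri n f"
    and null: "\<And>i j. 1 \<le> i \<Longrightarrow> i \<le> j \<Longrightarrow> j \<le> n \<Longrightarrow> f i j \<in> nullR i"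
    and C: "C \<in> Tmats n"
  shows "eval_left n f C = (\<lambda>i j. 0)"
proof (intro ext)
  fix i j
  have "poly_mat n (f l j) C i l = 0" for l
  proof (cases "1 \<le> l \<and> l \<le> j \<and> j \<le> n")
    case True
    show ?thesis
    proof (cases "1 \<le> i \<and> i \<le> l")
      case True
      with \<open>1 \<le> l \<and> l \<le> j \<and> j \<le> n\<close> show ?thesis
        by (intro poly_mat_eq_0_if_nullR[OF null C]) auto
    qed (use True poly_mat_eq_0_outside[OF C] in auto)
  qed (simp add: upper_tri_eq_0[OF f])
  then show "eval_left n f C i j = 0" by (simp add: eval_left_entry[OF f])
qed

lemma nullR_if_eval_right_null_step:
  assumes f: "upper_tri n f" and null: "\<forall>C\<in>Tmats n. eval_right n f C = (\<lambda>i j. 0)"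
    and "1 \<le> i" "i \<le> l" "l \<le> n"
    and later: "\<And>p. l < p \<Longrightarrow> p \<le> n \<Longrightarrow> f i p \<in> nullR (n - p + 1)"
  shows "f i l \<in> nullR (n - l + 1)"
proof (rule nullR_if_first_row_0)
  fix D :: "'a sqmat" and c assume D: "D \<in> Tmats (n - l + 1)" and c: "1 \<le> c" "c \<le> n - l + 1"
  let ?s = "l - 1"
  let ?C = "embed_mat ?s n D"
  have C: "?C \<in> Tmats n" using embed_mat_Tmats[OF D order.refl] .
  have "poly_mat n (f i p) ?C p (c + ?s) = 0" if "p \<noteq> l" for p
  proof (cases "p < l")
    case True
    then show ?thesis
      by (intro poly_mat_eq_0_if_rows_0[of ?s]) (use c in \<open>auto simp: embed_mat_def\<close>)
  next
    case False
    show ?thesis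
    proof (cases "p \<le> c + ?s")
      case True
      then show ?thesis
        using \<open>\<not> p < l\<close> that c assms(3-5)
        by (intro poly_mat_eq_0_if_nullR[OF later C]) auto
    qed (use poly_mat_eq_0_outside[OF C] in simp)
  qed
  then have "eval_right n f ?C i (c + ?s) = poly_mat n (f i l) ?C l (c + ?s)"
    unfolding eval_right_entry[OF f] using assms(4,5) \<open>1 \<le> i\<close>
    by (subst sum.mono_neutral_right[of "{1..n}" "{l}"]) auto
  also have "\<dots> = poly_mat (n - l + 1) (f i l) D 1 c"
    using poly_mat_embed_mat[OF D order.refl, of 1 c ?s] c assms(3-5) by simp
  finally show "poly_mat (n - l + 1) (f i l) D 1 c = 0"
    using null C by simp
qed

lemma nullR_if_eval_left_null_step:
  assumes f: "upper_tri n f" and null: "\<forall>C\<in>Tmats n. eval_left n f C = (\<lambda>i j. 0)"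
    and "1 \<le> l" "l \<le> j" "j \<le> n"
    and earlier: "\<And>p. 1 \<le> p \<Longrightarrow> p < l \<Longrightarrow> f p j \<in> nullR p"
  shows "f l j \<in> nullR l"
proof (rule nullR_if_last_column_0)
  fix D :: "'a sqmat" and a assume D: "D \<in> Tmats l" and a: "1 \<le> a" "a \<le> l"
  let ?C = "embed_mat 0 l D"
  have C: "?C \<in> Tmats n" using embed_mat_Tmats[OF D] assms(4,5) by simp
  have "poly_mat n (f p j) ?C a p = 0" if "p \<noteq> l" for p
  proof (cases "l < p")
    case True
    then show ?thesis
      by (intro poly_mat_eq_0_if_columns_0[of l]) (use a in \<open>auto simp: embed_mat_def\<close>)
  next
    case False
    show ?thesis
    proof (cases "a \<le> p")
      case True
      then show ?thesis
        using \<open>\<not> l < p\<close> that a assms(3-5)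
        by (intro poly_mat_eq_0_if_nullR[OF earlier C]) auto
    qed (use poly_mat_eq_0_outside[OF C] in simp)
  qed
  then have "eval_left n f ?C a j = poly_mat n (f l j) ?C a l"
    unfolding eval_left_entry[OF f] using assms(3-5)
    by (subst sum.mono_neutral_right[of "{1..n}" "{l}"]) auto
  also have "\<dots> = poly_mat l (f l j) D a l"
    using poly_mat_embed_mat[OF D, of l n a l 0] a assms(3-5) by simp
  finally show "poly_mat l (f l j) D a l = 0"
    using null C by simp
qed

lemma nullR_if_eval_right_null:
  assumes f: "upper_tri n f" and null: "\<forall>C\<in>Tmats n. eval_right n f C = (\<lambda>i j. 0)"
  shows "1 \<le> i \<Longrightarrow> i \<le> j \<Longrightarrow> j \<le> n \<Longrightarrow> f i j \<in> nullR (n - j + 1)"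
proof (induction "n - j" arbitrary: j rule: less_induct)
  case less
  show ?case
    by (rule nullR_if_eval_right_null_step[OF f null less.prems]) (use less in auto)
qed

lemma nullR_if_eval_left_null:
  assumes f: "upper_tri n f" and null: "\<forall>C\<in>Tmats n. eval_left n f C = (\<lambda>i j. 0)"
  shows "1 \<le> i \<Longrightarrow> i \<le> j \<Longrightarrow> j \<le> n \<Longrightarrow> f i j \<in> nullR i"
proof (induction i rule: less_induct)
  case (less i)
  show ?case
    by (rule nullR_if_eval_left_null_step[OF f null less.prems]) (use less in auto)
qed

theorem corollary5p1:
  fixes f :: "'a::comm_ring_1 poly sqmat" and n :: nat
  assumes "n \<ge> 1" and "upper_tri n f"
  shows "((\<forall>C\<in>Tmats n. eval_right n f C = (\<lambda>i j. 0)) \<longleftrightarrow>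
            (\<forall>i j. 1 \<le> i \<and> i \<le> j \<and> j \<le> n \<longrightarrow> f i j \<in> nullR (n - j + 1)))
       \<and> ((\<forall>C\<in>Tmats n. eval_left n f C = (\<lambda>i j. 0)) \<longleftrightarrow>
            (\<forall>i j. 1 \<le> i \<and> i \<le> j \<and> j \<le> n \<longrightarrow> f i j \<in> nullR i))"
  using eval_right_null_if_nullR[OF assms(2)] nullR_if_eval_right_null[OF assms(2)]
    eval_left_null_if_nullR[OF assms(2)] nullR_if_eval_left_null[OF assms(2)]
  by blast

end
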